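(* Let $D_1,\dots,D_n$ be semi-interlaced in a finite set $\mathbf P\subset\mathbb Z^n$ with $P=\operatorname{Conv}\mathbf P$. Let $S$ be a suture, and let $J=\{j_1,\dots,j_{n-\dim S}\}$ be the set of indices $j$ with $D_j\cap S=\emptyset$. For every $\xi\in(\pi_S(\mathbb R^n))^*$ with $\pi_S(P)^\xi=\mathbf O_S$, at least $\dim\big((\mathbf P_S\setminus\{\mathbf O_S\})^\xi\big)+1$ of the polytopes $\pi_S(D_{j_1}),\dots,\pi_S(D_{j_{n-\dim S}})$ intersect $(\mathbf P_S\setminus\{\mathbf O_S\})^\xi$.
   Context: **Notation.** $\pi_S:\mathbb R^n\to\mathbb R^n/\operatorname{aff}(S)$ sends $\operatorname{aff}(S)$ to the origin. For a finite set or polytope $Q$ and covector $\xi$, $Q^\xi$ is the subset (face) where $\xi$ attains its maximum; the dimension of a finite set is that of its convex hull. **Sets attached to $S$.** - $\mathbf O_S=\pi_S(S)$, a point. - $\mathbf P_S=\pi_S(\mathbf P)\cap\overline{\pi_S(P)\setminus\pi_S(\operatorname{Conv}(\mathbf P\setminus S))}$, where the overline denotes closure. **Daughter polytope.** For a nonempty polytope $D$ with vertices in $\mathbf P$, $\mathcal D(D)$ is the set of inclusion-maximal faces of $P$ disjoint from $D$. $D$ is a daughter polytope if: 1. distinct members of $\mathcal D(D)$ are disjoint; 2. $D=\operatorname{Conv}(\mathbf P\setminus\bigcup_{F\in\mathcal D(D)}F)$. **Semi-interlaced and sutures.** Daughter polytopes $D_1,\dots,D_n$ of $\mathbf P\subset\mathbb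 Z^n$ are semi-interlaced if every face $F$ of $P$ meets at least $\dim F$ of them. A suture is a face meeting exactly $\dim F$ of them. *)

theory Defs
  imports "HOL-Analysis.Analysis"
begin

text \<open>The quotient map pi_S : R^n -> R^n / aff(S), realised concretely as the map onto the
  orthogonal complement of the direction of aff(S): x is sent to x minus its closest point
  in the affine hull of S.\<close>
definition piS :: "('a::euclidean_space) set \<Rightarrow> 'a \<Rightarrow> 'a" where
  "piS S x = x - closest_point (affine hull S) x"

definition argmax_set :: "('a::real_inner) \<Rightarrow> 'a set \<Rightarrow> 'a set" where
  "argmax_set \<xi> Q = {x \<in> Q. \<forall>y\<in>Q. \<xi> \<bullet> y \<le> \<xi> \<bullet> x}"

definition O_S :: "('a::euclidean_space) set \<Rightarrow> 'a set" where
  "O_S S = piS S ` S"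

text \<open>The set P_S attached to S (bold P = the finite point set Pt, P = its convex hull).\<close>
definition P_S :: "('a::euclidean_space) set \<Rightarrow> 'a set \<Rightarrow> 'a set" where
  "P_S Pt S = piS S ` Pt \<inter>
     closure (piS S ` (convex hull Pt) - piS S ` (convex hull (Pt - S)))"

definition daughter_family :: "('a::euclidean_space) set \<Rightarrow> 'a set \<Rightarrow> 'a set set" where
  "daughter_family Pt D = {F. F face_of convex hull Pt \<and> F \<inter> D = {} \<and>
       (\<forall>G. G face_of convex hull Pt \<and> G \<inter> D = {} \<and> F \<subseteq> G \<longrightarrow> G = F)}"

definition daughter_polytope :: "('a::euclidean_space) set \<Rightarrow> 'a set \<Rightarrow> bool" where
  "daughter_polytope Pt D \<longleftrightarrow>
     (\<exists>V. V \<subseteq> Pt \<and> V \<noteq> {} \<and> D = convex hull V) \<and>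
     (\<forall>F\<in>daughter_family Pt D. \<forall>G\<in>daughter_family Pt D. F \<noteq> G \<longrightarrow> F \<inter> G = {}) \<and>
     D = convex hull (Pt - \<Union>(daughter_family Pt D))"

definition semi_interlaced :: "(real^'n) set \<Rightarrow> (nat \<Rightarrow> (real^'n) set) \<Rightarrow> bool" where
  "semi_interlaced Pt D \<longleftrightarrow>
     (\<forall>i\<in>{1..CARD('n)}. daughter_polytope Pt (D i)) \<and>
     (\<forall>F. F face_of convex hull Pt \<longrightarrow>
          aff_dim F \<le> int (card {i\<in>{1..CARD('n)}. D i \<inter> F \<noteq> {}}))"

definition suture :: "(real^'n) set \<Rightarrow> (nat \<Rightarrow> (real^'n) set) \<Rightarrow> (real^'n) set \<Rightarrow> bool" where
  "suture Pt D S \<longleftrightarrow> S face_of convex hull Pt \<and>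
     aff_dim S = int (card {i\<in>{1..CARD('n)}. D i \<inter> S \<noteq> {}})"

end

theory Submission
  imports Defs
begin

text \<open>
  Since pi_S is affine, xi o pi_S is an affine functional w x + c; it vanishes on S and, by the
  hypothesis on xi, is negative on the rest of P. Hence the maximisers of xi on P_S - O_S are
  exactly the projections of the set T of points of Pt - S maximising w. As pi_S kills aff S and
  maps T into a hyperplane avoiding the origin, dim pi_S(T) + 1 + dim S \<le> dim (S \<union> T).
  Let K be the smallest face of P containing S \<union> T. A daughter polytope D_j missing S and T
  misses K: if G and H are maximal faces of P disjoint from D_j with S \<subseteq> G and some t \<in> T in H,
  then adding to w a multiple of a functional exposing H gives a supporting hyperplane whose face
  contains t and a point of S but no point of D_j, so G = H by disjointness of the daughter family.
  Semi-interlacing applied to K and the suture equality for S now give the bound.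
\<close>

lemma piS_eq_0: "x \<in> affine hull S \<Longrightarrow> piS S x = 0"
  by (simp add: piS_def closest_point_self)

lemma piS_eq_0_iff:
  fixes S :: "'a::euclidean_space set"
  assumes "S \<noteq> {}"
  shows "piS S x = 0 \<longleftrightarrow> x \<in> affine hull S"
  using closest_point_refl[OF closed_affine_hull, of S x] assms
  by (auto simp: piS_def)

lemma diff_piS_in_affine_hull:
  fixes S :: "'a::euclidean_space set"
  assumes "S \<noteq> {}"
  shows "x - piS S x \<in> affine hull S"
  using assms by (simp add: piS_def closest_point_in_set)

lemma piS_orthogonal:
  fixes S :: "'a::euclidean_space set"
  assumes "S \<noteq> {}" "u \<in> affine hull S" "v \<in> affine hull S"
  shows "piS S x \<bullet> (u - v) = 0"
proof -
  let ?c = "closest_point (affine hull S) x"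
  have c: "?c \<in> affine hull S"
    using assms(1) by (simp add: closest_point_in_set)
  have le: "piS S x \<bullet> (z - ?c) \<le> 0" if "z \<in> affine hull S" for z
    unfolding piS_def
    using closest_point_dot[OF affine_imp_convex closed_affine_hull that] by simp
  have eq: "piS S x \<bullet> (z - ?c) = 0" if z: "z \<in> affine hull S" for z
  proof -
    \<comment> \<open>the obtuse-angle inequality, applied to z and to its reflection 2c - z, is an equality\<close>
    have "2 *\<^sub>R ?c + (-1) *\<^sub>R z \<in> affine hull S"
      by (rule mem_affine[OF affine_affine_hull c z]) simp
    from le[OF this] le[OF z] show ?thesis
      by (simp add: algebra_simps scaleR_2)
  qed
  have "u - v = (u - ?c) - (v - ?c)" by simp
  then show ?thesis using eq[OF assms(2)] eq[OF assms(3)] by (simp add: inner_diff_right)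
qed

lemma piS_unique:
  fixes S :: "'a::euclidean_space set"
  assumes "S \<noteq> {}" "x - p \<in> affine hull S"
    and orth: "\<And>u v. u \<in> affine hull S \<Longrightarrow> v \<in> affine hull S \<Longrightarrow> p \<bullet> (u - v) = 0"
  shows "piS S x = p"
proof -
  let ?q = "piS S x"
  have q: "x - ?q \<in> affine hull S" by (rule diff_piS_in_affine_hull[OF assms(1)])
  have "p - ?q = (x - ?q) - (x - p)" by simp
  then have "p \<bullet> (p - ?q) = 0" "?q \<bullet> (p - ?q) = 0"
    using orth[OF q assms(2)] piS_orthogonal[OF assms(1) q assms(2)] by simp_all
  then have "(p - ?q) \<bullet> (p - ?q) = 0" by (simp add: inner_diff_left)
  then show ?thesis by simp
qed

lemma piS_segment:
  fixes S :: "'a::euclidean_space set"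
  assumes "s \<in> affine hull S"
  shows "piS S ((1 - u) *\<^sub>R s + u *\<^sub>R x) = u *\<^sub>R piS S x"
proof -
  have ne: "S \<noteq> {}" using assms by auto
  show ?thesis
  proof (rule piS_unique[OF ne])
    have "(1 - u) *\<^sub>R s + u *\<^sub>R (x - piS S x) \<in> affine hull S"
      by (rule mem_affine[OF affine_affine_hull assms diff_piS_in_affine_hull[OF ne]]) simp
    then show "(1 - u) *\<^sub>R s + u *\<^sub>R x - u *\<^sub>R piS S x \<in> affine hull S"
      by (simp add: algebra_simps)
  qed (simp add: piS_orthogonal[OF ne])
qed

lemma linear_piS_translate:
  fixes S :: "'a::euclidean_space set"
  assumes s: "s \<in> affine hull S"
  shows "linear (\<lambda>v. piS S (s + v))"
proof (rule linearI)
  have ne: "S \<noteq> {}" using s by auto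
  fix u v
  let ?p = "piS S (s + u) + piS S (s + v)"
  show "piS S (s + (u + v)) = ?p"
  proof (rule piS_unique[OF ne])
    have "1 *\<^sub>R (s + u - piS S (s + u)) + 1 *\<^sub>R (s + v - piS S (s + v)) + (-1) *\<^sub>R s
        \<in> affine hull S"
      using ne s by (intro mem_affine_3 diff_piS_in_affine_hull) auto
    then show "s + (u + v) - ?p \<in> affine hull S" by (simp add: algebra_simps)
  qed (simp add: inner_add_left piS_orthogonal[OF ne])
next
  fix r v
  have "s + r *\<^sub>R v = (1 - r) *\<^sub>R s + r *\<^sub>R (s + v)" by (simp add: algebra_simps)
  then show "piS S (s + r *\<^sub>R v) = r *\<^sub>R piS S (s + v)"
    by (simp add: piS_segment[OF s])
qed

lemma inner_piS_affine:
  fixes S :: "'a::euclidean_space set"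
  assumes "S \<noteq> {}"
  obtains w c where "\<And>x. \<xi> \<bullet> piS S x = w \<bullet> x + c"
proof -
  obtain s where s: "s \<in> affine hull S" using assms by (meson all_not_in_conv hull_inc)
  define L where "L v = piS S (s + v)" for v
  have L: "linear L" unfolding L_def by (rule linear_piS_translate[OF s])
  have "\<xi> \<bullet> piS S x = adjoint L \<xi> \<bullet> x + \<xi> \<bullet> L (- s)" for x
  proof -
    have "piS S x = L (x - s)" by (simp add: L_def)
    also have "\<dots> = L x + L (- s)" using linear_add[OF L, of x "- s"] by simp
    finally show ?thesis
      using adjoint_works[OF L, of x \<xi>] by (simp add: inner_add_right inner_commute)
  qed
  then show ?thesis by (rule that)
qed

lemma aff_dim_piS_image:
  fixes S X :: "'a::euclidean_space set"
  assumes "S \<noteq> {}"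
  shows "aff_dim (insert 0 (piS S ` X)) + aff_dim S \<le> aff_dim (S \<union> X)"
proof -
  obtain s where s: "s \<in> S" using assms by blast
  define U where "U = span ((\<lambda>y. y - s) ` (S \<union> X))"
  define V where "V = span ((\<lambda>y. y - s) ` S)"
  define W where "W = {y \<in> U. \<forall>v\<in>V. orthogonal v y}"
  have VU: "V \<subseteq> U" unfolding U_def V_def by (intro span_mono image_mono) simp
  have dim_W: "dim W + dim V = dim U"
    unfolding W_def using VU by (intro dim_subspace_orthogonal_to_vectors) (simp_all add: U_def V_def)
  have "W = U \<inter> {y. \<forall>v\<in>V. orthogonal v y}" unfolding W_def by blast
  then have "subspace W"
    by (simp add: U_def subspace_inter subspace_orthogonal_to_vectors)
  have "piS S x \<in> W" if x: "x \<in> X" for x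
  proof -
    have "x - piS S x \<in> affine hull S" by (rule diff_piS_in_affine_hull[OF assms])
    then have "x - piS S x - s \<in> V"
      unfolding V_def affine_hull_span_gen[OF hull_inc[OF s]] by force
    moreover have "x - s \<in> U" unfolding U_def using x by (intro span_base) blast
    moreover have "piS S x = (x - s) - (x - piS S x - s)" by simp
    ultimately have "piS S x \<in> U" using VU by (metis subsetD subspace_diff subspace_span U_def)
    moreover have "orthogonal v (piS S x)" if "v \<in> V" for v
      using that unfolding V_def orthogonal_commute[of v]
      by (rule orthogonal_to_span)
        (auto simp: orthogonal_def piS_orthogonal[OF assms] hull_inc s)
    ultimately show ?thesis unfolding W_def by blast
  qed
  then have "insert 0 (piS S ` X) \<subseteq> W" using \<open>subspace W\<close> subspace_0 by blast
  then have "aff_dim (insert 0 (piS S ` X)) \<le> int (dim W)"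
    using aff_dim_subset aff_dim_subspace[OF \<open>subspace W\<close>] by metis
  moreover have "aff_dim S = int (dim V)"
    using aff_dim_eq_dim_subtract[OF hull_inc[OF s]] by (simp add: V_def)
  moreover have "aff_dim (S \<union> X) = int (dim U)"
    using aff_dim_eq_dim_subtract[of s "S \<union> X"] s by (simp add: U_def hull_inc)
  ultimately show ?thesis using dim_W by linarith
qed

lemma argmax_set_nonempty:
  assumes "finite X" "X \<noteq> {}"
  shows "argmax_set w X \<noteq> {}"
proof -
  obtain x where "x \<in> X" "Max ((\<bullet>) w ` X) = w \<bullet> x" using obtains_MAX[OF assms] .
  then have "x \<in> argmax_set w X"
    using assms(1) by (auto simp: argmax_set_def) (metis Max_ge finite_imageI image_eqI)
  then show ?thesis by blast
qed

lemma argmax_set_image: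
  assumes "\<And>x. \<xi> \<bullet> f x = w \<bullet> x + c"
  shows "argmax_set \<xi> (f ` X) = f ` argmax_set w X"
  using assms by (auto simp: argmax_set_def)

lemma argmax_set_eq_if_between:
  assumes "finite Q" "A \<subseteq> Q" "argmax_set \<xi> Q \<subseteq> A"
  shows "argmax_set \<xi> A = argmax_set \<xi> Q"
proof (cases "Q = {}")
  case False
  then obtain q where q: "q \<in> argmax_set \<xi> Q" using argmax_set_nonempty[OF assms(1)] by blast
  show ?thesis
  proof (intro equalityI subsetI)
    fix x assume "x \<in> argmax_set \<xi> A"
    moreover have "q \<in> A" using q assms(3) by blast
    ultimately have "x \<in> Q" "\<xi> \<bullet> q \<le> \<xi> \<bullet> x" using assms(2) by (auto simp: argmax_set_def)
    with q show "x \<in> argmax_set \<xi> Q" by (auto simp: argmax_set_def intro: order_trans)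
  next
    fix x assume "x \<in> argmax_set \<xi> Q"
    with assms(2,3) show "x \<in> argmax_set \<xi> A" by (auto simp: argmax_set_def)
  qed
qed (use assms(2) in simp)

lemma zero_notin_affine_hull_argmax_set:
  assumes "\<forall>y\<in>argmax_set \<xi> X. \<xi> \<bullet> y < 0"
  shows "0 \<notin> affine hull argmax_set \<xi> X"
proof (cases "argmax_set \<xi> X = {}")
  case False
  then obtain y where y: "y \<in> argmax_set \<xi> X" by blast
  then have "argmax_set \<xi> X \<subseteq> {z. \<xi> \<bullet> z = \<xi> \<bullet> y}"
    by (auto simp: argmax_set_def intro: antisym)
  then have "affine hull argmax_set \<xi> X \<subseteq> {z. \<xi> \<bullet> z = \<xi> \<bullet> y}"
    by (intro hull_minimal) (auto simp: affine_hyperplane)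
  with assms y show ?thesis by fastforce
qed simp

lemma O_S_eq:
  fixes S :: "'a::euclidean_space set"
  assumes "S \<noteq> {}"
  shows "O_S S = {0}"
  using assms by (auto simp: O_S_def piS_eq_0 hull_inc)

lemma inner_piS_neg:
  fixes Pt S :: "'a::euclidean_space set"
  assumes S: "S face_of convex hull Pt" "S \<noteq> {}"
    and max: "argmax_set \<xi> (piS S ` (convex hull Pt)) = O_S S"
    and x: "x \<in> convex hull Pt" "x \<notin> S"
  shows "\<xi> \<bullet> piS S x < 0"
proof -
  have "0 \<in> argmax_set \<xi> (piS S ` (convex hull Pt))" using max O_S_eq[OF S(2)] by simp
  then have le: "\<forall>y\<in>piS S ` (convex hull Pt). \<xi> \<bullet> y \<le> 0" by (simp add: argmax_set_def)
  have "x \<notin> affine hull S"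
    using face_of_imp_eq_affine_Int[OF convex_convex_hull S(1)] x by blast
  then have "piS S x \<notin> argmax_set \<xi> (piS S ` (convex hull Pt))"
    using max O_S_eq[OF S(2)] piS_eq_0_iff[OF S(2)] by simp
  with le x(1) show ?thesis by (force simp: argmax_set_def)
qed

lemma inner_piS_convex_hull_le:
  fixes S :: "'a::euclidean_space set"
  assumes "S \<noteq> {}" "\<forall>x\<in>X. \<xi> \<bullet> piS S x \<le> m" "z \<in> convex hull X"
  shows "\<xi> \<bullet> piS S z \<le> m"
proof -
  obtain w c where wc: "\<And>x. \<xi> \<bullet> piS S x = w \<bullet> x + c" using inner_piS_affine[OF assms(1)] by blast
  have "convex hull X \<subseteq> {x. w \<bullet> x \<le> m - c}"
    using assms(2) by (intro hull_minimal) (auto simp: wc convex_halfspace_le)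
  with assms(3) show ?thesis by (auto simp: wc)
qed

lemma argmax_P_S_minus_O_S:
  fixes Pt S :: "'a::euclidean_space set"
  assumes "finite Pt" and S: "S face_of convex hull Pt" "S \<noteq> {}"
    and max: "argmax_set \<xi> (piS S ` (convex hull Pt)) = O_S S"
  shows "argmax_set \<xi> (P_S Pt S - O_S S) = argmax_set \<xi> (piS S ` (Pt - S))"
proof (rule argmax_set_eq_if_between)
  show "finite (piS S ` (Pt - S))" using assms(1) by simp
  show "P_S Pt S - O_S S \<subseteq> piS S ` (Pt - S)"
    using O_S_eq[OF S(2)] by (auto simp: P_S_def piS_eq_0 hull_inc)
  show "argmax_set \<xi> (piS S ` (Pt - S)) \<subseteq> P_S Pt S - O_S S"
  proof
    fix y assume "y \<in> argmax_set \<xi> (piS S ` (Pt - S))"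
    then obtain t where t: "t \<in> Pt" "t \<notin> S" "y = piS S t"
      and le: "\<forall>x\<in>Pt - S. \<xi> \<bullet> piS S x \<le> \<xi> \<bullet> y"
      by (auto simp: argmax_set_def)
    have neg: "\<xi> \<bullet> y < 0" using inner_piS_neg[OF S max] t hull_inc by metis
    obtain s where s: "s \<in> S" using S(2) by blast
    \<comment> \<open>shrinking y towards the origin O_S leaves the image of the convex hull of Pt - S\<close>
    have "open_segment 0 y \<subseteq> piS S ` (convex hull Pt) - piS S ` (convex hull (Pt - S))"
    proof
      fix z assume "z \<in> open_segment 0 y"
      then obtain u where u: "0 < u" "u < 1" "z = u *\<^sub>R y" by (auto simp: in_segment)
      have "z = piS S ((1 - u) *\<^sub>R s + u *\<^sub>R t)" using piS_segment[OF hull_inc[OF s]] u t by simp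
      moreover have "(1 - u) *\<^sub>R s + u *\<^sub>R t \<in> convex hull Pt"
        using face_of_imp_subset[OF S(1)] s t u
        by (intro convexD[OF convex_convex_hull]) (auto simp: hull_inc)
      moreover have "z \<notin> piS S ` (convex hull (Pt - S))"
      proof
        assume "z \<in> piS S ` (convex hull (Pt - S))"
        then have "\<xi> \<bullet> z \<le> \<xi> \<bullet> y" using inner_piS_convex_hull_le[OF S(2) le] by blast
        moreover have "\<xi> \<bullet> y < \<xi> \<bullet> z" using u neg by (simp add: mult_less_cancel_right2)
        ultimately show False by simp
      qed
      ultimately show "z \<in> piS S ` (convex hull Pt) - piS S ` (convex hull (Pt - S))" by blast
    qed
    then have "closure (open_segment 0 y)
        \<subseteq> closure (piS S ` (convex hull Pt) - piS S ` (convex hull (Pt - S)))"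
      by (rule closure_mono)
    moreover have "y \<in> closure (open_segment 0 y)" using neg by auto
    ultimately show "y \<in> P_S Pt S - O_S S"
      using t neg O_S_eq[OF S(2)] by (auto simp: P_S_def)
  qed
qed

lemma daughter_family_exists_superset:
  fixes Pt :: "'a::euclidean_space set"
  assumes "finite Pt" "F face_of convex hull Pt" "F \<inter> D = {}"
  obtains G where "G \<in> daughter_family Pt D" "F \<subseteq> G"
proof -
  let ?C = "{G. G face_of convex hull Pt \<and> G \<inter> D = {} \<and> F \<subseteq> G}"
  have "finite ?C"
    using finite_polytope_faces[OF polytope_convex_hull[OF assms(1)]]
    by (rule rev_finite_subset) blast
  moreover have "F \<in> ?C" using assms(2,3) by blast
  ultimately have "\<exists>G\<in>?C. F \<subseteq> G \<and> (\<forall>G'\<in>?C. G \<subseteq> G' \<longrightarrow> G = G')"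
    by (rule finite_has_maximal2)
  then obtain G where G: "G face_of convex hull Pt" "G \<inter> D = {}" "F \<subseteq> G"
    and max: "\<And>G'. G' \<in> ?C \<Longrightarrow> G \<subseteq> G' \<Longrightarrow> G = G'"
    by auto
  have "G \<in> daughter_family Pt D"
    unfolding daughter_family_def
  proof (intro CollectI conjI allI impI)
    fix G' assume "G' face_of convex hull Pt \<and> G' \<inter> D = {} \<and> G \<subseteq> G'"
    then show "G' = G" using max[of G'] G(3) by auto
  qed (fact G(1), fact G(2))
  then show ?thesis using G(3) by (rule that)
qed

lemma daughter_family_eq:
  assumes "daughter_polytope Pt D" "F \<in> daughter_family Pt D" "G \<in> daughter_family Pt D"
    "x \<in> F" "x \<in> G"
  shows "F = G"
  using assms by (auto simp: daughter_polytope_def)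

lemma Diff_Union_daughter_family_subset:
  "daughter_polytope Pt D \<Longrightarrow> Pt - \<Union>(daughter_family Pt D) \<subseteq> D"
  unfolding daughter_polytope_def by (metis hull_subset)

lemma face_through_argmax_pair:
  fixes Pt S :: "'a::euclidean_space set"
  assumes w: "\<forall>x\<in>Pt \<inter> S. w \<bullet> x = c" "\<forall>x\<in>Pt - S. w \<bullet> x < c"
    and a: "\<forall>x\<in>Pt. a \<bullet> x \<le> b"
    and s: "s \<in> argmax_set a (Pt \<inter> S)" "a \<bullet> s < b"
    and t: "t \<in> argmax_set w (Pt - S)" "a \<bullet> t = b"
  obtains F where "F face_of convex hull Pt" "s \<in> F" "t \<in> F"
    "F \<inter> convex hull (Pt - S - argmax_set w (Pt - S)) = {}"
proof -
  define m where "m = w \<bullet> t"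
  have m: "m < c" "\<forall>x\<in>Pt - S. w \<bullet> x \<le> m"
    using w(2) t(1) by (auto simp: m_def argmax_set_def)
  have s': "s \<in> Pt" "s \<in> S" "\<forall>x\<in>Pt \<inter> S. a \<bullet> x \<le> a \<bullet> s"
    using s(1) by (auto simp: argmax_set_def)
  \<comment> \<open>tilt the hyperplane w = m about its intersection with a = b until it passes through s\<close>
  define \<kappa> where "\<kappa> = (m - c) / (a \<bullet> s - b)"
  define v where "v = w + \<kappa> *\<^sub>R a"
  define \<beta> where "\<beta> = m + \<kappa> * b"
  have \<kappa>: "\<kappa> > 0" "\<kappa> * (a \<bullet> s - b) = m - c"
    using m(1) s(2) by (auto simp: \<kappa>_def divide_neg_neg)
  have le: "v \<bullet> x \<le> \<beta>" if "x \<in> Pt" for x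
  proof (cases "x \<in> S")
    case True
    then have "\<kappa> * (a \<bullet> x) \<le> \<kappa> * (a \<bullet> s)" using s'(3) \<kappa>(1) that by simp
    then show ?thesis using w(1) \<kappa>(2) that True by (simp add: v_def \<beta>_def algebra_simps)
  next
    case False
    have "\<kappa> * (a \<bullet> x) \<le> \<kappa> * b" using a \<kappa>(1) that by simp
    moreover have "w \<bullet> x \<le> m" using m(2) that False by blast
    ultimately show ?thesis by (simp add: v_def \<beta>_def inner_add_left)
  qed
  have lt: "v \<bullet> x < \<beta>" if "x \<in> Pt - S - argmax_set w (Pt - S)" for x
  proof -
    have "w \<bullet> x < m" using that t(1) by (force simp: m_def argmax_set_def)
    moreover have "\<kappa> * (a \<bullet> x) \<le> \<kappa> * b" using a \<kappa>(1) that by simp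
    ultimately show ?thesis by (simp add: v_def \<beta>_def inner_add_left)
  qed
  define F where "F = convex hull Pt \<inter> {x. v \<bullet> x = \<beta>}"
  have "convex hull Pt \<subseteq> {x. v \<bullet> x \<le> \<beta>}"
    using le by (intro hull_minimal) (auto simp: convex_halfspace_le)
  then have "F face_of convex hull Pt"
    unfolding F_def by (intro face_of_Int_supporting_hyperplane_le) auto
  moreover have "s \<in> F" "t \<in> F"
    using s' t w(1) \<kappa>(2)
    by (auto simp: F_def v_def \<beta>_def m_def argmax_set_def algebra_simps hull_inc)
  moreover have "convex hull (Pt - S - argmax_set w (Pt - S)) \<subseteq> {x. v \<bullet> x < \<beta>}"
    using lt by (intro hull_minimal) (auto simp: convex_halfspace_lt)
  then have "F \<inter> convex hull (Pt - S - argmax_set w (Pt - S)) = {}"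
    by (auto simp: F_def)
  ultimately show ?thesis using that by blast
qed

lemma daughter_family_eq_through_argmax:
  fixes Pt S :: "'a::euclidean_space set"
  assumes "finite Pt" and dp: "daughter_polytope Pt D" and PS: "Pt \<inter> S \<noteq> {}"
    and w: "\<forall>x\<in>S. w \<bullet> x = c" "\<forall>x\<in>Pt - S. w \<bullet> x < c"
    and D: "D \<subseteq> convex hull (Pt - S - argmax_set w (Pt - S))"
    and G: "G \<in> daughter_family Pt D" "S \<subseteq> G"
    and H: "H \<in> daughter_family Pt D" "t \<in> H" "t \<in> argmax_set w (Pt - S)"
  shows "G = H"
proof -
  have "H exposed_face_of convex hull Pt"
    using exposed_face_of_polyhedron[OF polytope_imp_polyhedron[OF polytope_convex_hull[OF assms(1)]]]
      H(1) by (simp add: daughter_family_def)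
  then obtain a b where ab: "convex hull Pt \<subseteq> {x. a \<bullet> x \<le> b}" "H = convex hull Pt \<inter> {x. a \<bullet> x = b}"
    unfolding exposed_face_of_def by blast
  obtain s where s: "s \<in> argmax_set a (Pt \<inter> S)"
    using argmax_set_nonempty[OF _ PS] assms(1) by blast
  then have "s \<in> G" "s \<in> convex hull Pt" using G(2) by (auto simp: argmax_set_def hull_inc)
  then have "a \<bullet> s \<le> b" using ab(1) by blast
  show "G = H"
  proof (cases "a \<bullet> s < b")
    case True
    have "\<forall>x\<in>Pt. a \<bullet> x \<le> b" using ab(1) hull_subset[of Pt convex] by blast
    moreover have "a \<bullet> t = b" using ab(2) H(2) by blast
    ultimately obtain F where F: "F face_of convex hull Pt" "s \<in> F" "t \<in> F"
        "F \<inter> convex hull (Pt - S - argmax_set w (Pt - S)) = {}"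
      using face_through_argmax_pair[OF _ w(2) _ s True H(3)] w(1) by blast
    have "F \<inter> D = {}" using F(4) D by blast
    then obtain F' where F': "F' \<in> daughter_family Pt D" "F \<subseteq> F'"
      using daughter_family_exists_superset[OF assms(1) F(1)] by blast
    have "F' = G" using daughter_family_eq[OF dp F'(1) G(1)] F(2) F'(2) \<open>s \<in> G\<close> by blast
    moreover have "F' = H" using daughter_family_eq[OF dp F'(1) H(1)] F(3) F'(2) H(2) by blast
    ultimately show ?thesis by simp
  next
    case False
    then have "s \<in> H" using ab(2) \<open>s \<in> convex hull Pt\<close> \<open>a \<bullet> s \<le> b\<close> by simp
    then show ?thesis using daughter_family_eq[OF dp G(1) H(1) \<open>s \<in> G\<close>] by simp
  qed
qed

lemma daughter_polytope_face_containing_argmax: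
  fixes Pt S :: "'a::euclidean_space set"
  assumes "finite Pt" and dp: "daughter_polytope Pt D"
    and S: "S face_of convex hull Pt" "S \<noteq> {}" "S \<inter> D = {}"
    and w: "\<forall>x\<in>S. w \<bullet> x = c" "\<forall>x\<in>Pt - S. w \<bullet> x < c"
    and TD: "argmax_set w (Pt - S) \<inter> D = {}"
  obtains G where "G face_of convex hull Pt" "G \<inter> D = {}" "S \<union> argmax_set w (Pt - S) \<subseteq> G"
proof -
  let ?fam = "daughter_family Pt D"
  let ?T = "argmax_set w (Pt - S)"
  obtain G where G: "G \<in> ?fam" "S \<subseteq> G"
    using daughter_family_exists_superset[OF assms(1) S(1,3)] .
  obtain S' where "S' \<subseteq> Pt" "S = convex hull S'"
    using face_of_convex_hull_subset[OF finite_imp_compact[OF assms(1)] S(1)] .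
  then have PS: "Pt \<inter> S \<noteq> {}" using S(2) hull_subset[of S' convex] by auto
  have "Pt - \<Union>?fam \<subseteq> Pt - S - ?T" using Diff_Union_daughter_family_subset[OF dp] S(3) TD by blast
  moreover have D_eq: "D = convex hull (Pt - \<Union>?fam)"
    using dp unfolding daughter_polytope_def by (elim conjE)
  ultimately have D_sub: "D \<subseteq> convex hull (Pt - S - ?T)" by (subst D_eq) (rule hull_mono)
  have "t \<in> G" if t: "t \<in> ?T" for t
  proof -
    have "t \<in> Pt - \<Union>?fam \<Longrightarrow> t \<in> D" using Diff_Union_daughter_family_subset[OF dp] by blast
    then obtain H where H: "H \<in> ?fam" "t \<in> H" using t TD by (auto simp: argmax_set_def)
    have "G = H" by (rule daughter_family_eq_through_argmax[OF assms(1) dp PS w D_sub G H t])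
    with H(2) show "t \<in> G" by simp
  qed
  moreover have "G face_of convex hull Pt" "G \<inter> D = {}" using G(1) by (simp_all add: daughter_family_def)
  ultimately show ?thesis using that G(2) by blast
qed

lemma suture_nonempty: "suture Pt D S \<Longrightarrow> S \<noteq> {}"
  by (auto simp: suture_def)

lemma aff_dim_suture_Un_argmax_le:
  fixes Pt :: "(real^'n) set"
  assumes "finite Pt" "semi_interlaced Pt D" "suture Pt D S"
    and w: "\<forall>x\<in>S. w \<bullet> x = c" "\<forall>x\<in>Pt - S. w \<bullet> x < c"
  shows "aff_dim (S \<union> argmax_set w (Pt - S)) \<le> aff_dim S +
    int (card {j\<in>{1..CARD('n)}. D j \<inter> S = {} \<and> D j \<inter> argmax_set w (Pt - S) \<noteq> {}})"
proof -
  let ?T = "argmax_set w (Pt - S)"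
  let ?N = "CARD('n)"
  have S: "S face_of convex hull Pt" "S \<noteq> {}"
    and dim_S: "aff_dim S = int (card {i\<in>{1..?N}. D i \<inter> S \<noteq> {}})"
    using assms(3) suture_nonempty by (auto simp: suture_def)
  define K where "K = \<Inter>{G. G face_of convex hull Pt \<and> S \<union> ?T \<subseteq> G}"
  have "S \<union> ?T \<subseteq> convex hull Pt"
    using face_of_imp_subset[OF S(1)] by (auto simp: argmax_set_def hull_inc)
  then have K: "K face_of convex hull Pt" "S \<union> ?T \<subseteq> K"
    unfolding K_def using face_of_refl[OF convex_convex_hull] by (auto intro: face_of_Inter)
  have meets: "D i \<inter> S \<noteq> {} \<or> D i \<inter> ?T \<noteq> {}" if i: "i \<in> {1..?N}" "D i \<inter> K \<noteq> {}" for i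
  proof (rule ccontr)
    assume "\<not> ?thesis"
    moreover have "daughter_polytope Pt (D i)" using assms(2) i(1) by (simp add: semi_interlaced_def)
    ultimately obtain G where "G face_of convex hull Pt" "G \<inter> D i = {}" "S \<union> ?T \<subseteq> G"
      using daughter_polytope_face_containing_argmax[OF assms(1) _ S, of "D i" w c] w
      by (metis inf_commute)
    then show False using i(2) unfolding K_def by blast
  qed
  have "card {i\<in>{1..?N}. D i \<inter> K \<noteq> {}} \<le>
      card ({i\<in>{1..?N}. D i \<inter> S \<noteq> {}} \<union> {j\<in>{1..?N}. D j \<inter> S = {} \<and> D j \<inter> ?T \<noteq> {}})"
    using meets by (intro card_mono) auto
  also have "\<dots> \<le> card {i\<in>{1..?N}. D i \<inter> S \<noteq> {}} + card {j\<in>{1..?N}. D j \<inter> S = {} \<and> D j \<inter> ?T \<noteq> {}}"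
    by (rule card_Un_le)
  finally have "aff_dim K \<le> aff_dim S + int (card {j\<in>{1..?N}. D j \<inter> S = {} \<and> D j \<inter> ?T \<noteq> {}})"
    using assms(2) K(1) dim_S unfolding semi_interlaced_def by fastforce
  then show ?thesis using aff_dim_subset[OF K(2)] by linarith
qed

theorem corollary4p3:
  fixes Pt :: "(real^'n) set" and D :: "nat \<Rightarrow> (real^'n) set" and S :: "(real^'n) set"
    and \<xi> :: "real^'n"
  assumes "finite Pt"
    and "\<forall>x\<in>Pt. \<forall>i. x $ i \<in> \<int>"
    and "semi_interlaced Pt D"
    and "suture Pt D S"
    and "argmax_set \<xi> (piS S ` (convex hull Pt)) = O_S S"
  shows "aff_dim (argmax_set \<xi> (P_S Pt S - O_S S)) + 1 \<le>
    int (card {j\<in>{1..CARD('n)}. D j \<inter> S = {} \<and>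
              piS S ` (D j) \<inter> argmax_set \<xi> (P_S Pt S - O_S S) \<noteq> {}})"
proof -
  have S: "S face_of convex hull Pt" "S \<noteq> {}"
    using assms(4) suture_nonempty by (auto simp: suture_def)
  obtain w c where wc: "\<And>x. \<xi> \<bullet> piS S x = w \<bullet> x + c" using inner_piS_affine[OF S(2)] by blast
  have neg: "\<forall>x\<in>Pt - S. \<xi> \<bullet> piS S x < 0" using inner_piS_neg[OF S assms(5)] by (simp add: hull_inc)
  have "w \<bullet> x = - c" if "x \<in> S" for x
    using wc[of x] that by (simp add: piS_eq_0 hull_inc eq_neg_iff_add_eq_0)
  moreover have "w \<bullet> x < - c" if "x \<in> Pt - S" for x
    using wc[of x] bspec[OF neg that] by linarith
  ultimately have w: "\<forall>x\<in>S. w \<bullet> x = - c" "\<forall>x\<in>Pt - S. w \<bullet> x < - c" by blast+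
  define T where "T = argmax_set w (Pt - S)"
  have T: "piS S ` T = argmax_set \<xi> (piS S ` (Pt - S))" using argmax_set_image[OF wc] by (simp add: T_def)
  have "0 \<notin> affine hull (piS S ` T)"
    unfolding T by (rule zero_notin_affine_hull_argmax_set) (use neg in \<open>auto simp: argmax_set_def\<close>)
  then have "aff_dim (piS S ` T) + 1 + aff_dim S \<le> aff_dim (S \<union> T)"
    using aff_dim_piS_image[OF S(2), of T] by (simp add: aff_dim_insert)
  also have "\<dots> \<le> aff_dim S + int (card {j\<in>{1..CARD('n)}. D j \<inter> S = {} \<and> D j \<inter> T \<noteq> {}})"
    unfolding T_def using aff_dim_suture_Un_argmax_le[OF assms(1,3,4) w] by simp
  also have "card {j\<in>{1..CARD('n)}. D j \<inter> S = {} \<and> D j \<inter> T \<noteq> {}} \<le>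
      card {j\<in>{1..CARD('n)}. D j \<inter> S = {} \<and> piS S ` (D j) \<inter> piS S ` T \<noteq> {}}"
    by (intro card_mono) auto
  finally show ?thesis
    using argmax_P_S_minus_O_S[OF assms(1) S assms(5)] T by simp
qed

end
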